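(* Let $G=(V,E)$ be a connected graph with at least two vertices. Call a multiset $\mathcal{D}$ of edges of $G$ a domino covering if every vertex is an endpoint of some edge of $\mathcal{D}$, and call it saturated if removing any single edge from $\mathcal{D}$ leaves some vertex not an endpoint of any remaining edge. Then the maximum number of edges in a saturated domino covering of $G$ equals $|V| - \gamma(G)$, where $\gamma(G)$ is the domination number of $G$ (the minimum number of vertex sets of star subgraphs of $G$ needed to cover $V$). *)

theory Defs
  imports Main "HOL-Library.Multiset"
begin

definition simple_graph :: "'a set \<Rightarrow> 'a set set \<Rightarrow> bool" where
  "simple_graph V E \<longleftrightarrow> finite V \<and>
     (\<forall>e\<in>E. \<exists>u v. e = {u, v} \<and> u \<noteq> v \<and> u \<in> V \<and> v \<in> V)"

definition adj :: "'a set set \<Rightarrow> 'a \<Rightarrow> 'a \<Rightarrow> bool" where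
  "adj E u v \<longleftrightarrow> {u, v} \<in> E"

definition connected_graph :: "'a set \<Rightarrow> 'a set set \<Rightarrow> bool" where
  "connected_graph V E \<longleftrightarrow> (\<forall>u\<in>V. \<forall>v\<in>V. (adj E)\<^sup>*\<^sup>* u v)"

definition domino_covering :: "'a set \<Rightarrow> 'a set set \<Rightarrow> 'a set multiset \<Rightarrow> bool" where
  "domino_covering V E D \<longleftrightarrow> set_mset D \<subseteq> E \<and> (\<forall>v\<in>V. \<exists>e\<in>#D. v \<in> e)"

definition saturated :: "'a set \<Rightarrow> 'a set multiset \<Rightarrow> bool" where
  "saturated V D \<longleftrightarrow> (\<forall>e\<in>#D. \<exists>v\<in>V. \<forall>e'\<in># D - {#e#}. v \<notin> e')"

definition star_vset :: "'a set \<Rightarrow> 'a set set \<Rightarrow> 'a set \<Rightarrow> bool" where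
  "star_vset V E S \<longleftrightarrow> (\<exists>c\<in>S. S \<subseteq> V \<and> S - {c} \<noteq> {} \<and> (\<forall>x\<in>S - {c}. adj E c x))"

definition domination_number :: "'a set \<Rightarrow> 'a set set \<Rightarrow> nat" where
  "domination_number V E = (LEAST k. \<exists>F. finite F \<and> card F = k \<and>
      (\<forall>S\<in>F. star_vset V E S) \<and> V \<subseteq> \<Union>F)"

end

theory Submission
  imports Defs
begin

(* In a saturated covering D every edge e has a private vertex p e,
   i.e. a vertex lying on e and on no other edge of D.  Hence D has no repeated
   edges and p is injective, so there are exactly size D private vertices.  Each
   remaining vertex c is the centre of the star formed by c and its D-neighbours;
   these card V - size D stars cover V, so domination_number <= card V - size D.

   A minimum star cover is turned into a star-forest map h: every
   vertex is sent to a centre (a fixed point of h) adjacent to it.  A centre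
   receiving no other vertex is lonely; lonely centres are removed one at a time by
   local surgery that never increases the number of centres.  When no centre is
   lonely, the edges {v, h v} of the non-centres form a saturated covering with
   card V - #centres >= card V - domination_number edges. *)

lemma edge_endpoints:
  assumes "simple_graph V E" "{x, y} \<in> E"
  shows "x \<noteq> y \<and> x \<in> V \<and> y \<in> V"
proof -
  obtain a b where "{x, y} = {a, b}" "a \<noteq> b" "a \<in> V" "b \<in> V"
    using assms unfolding simple_graph_def by blast
  then show ?thesis by (metis doubleton_eq_iff)
qed

lemma connected_has_neighbour:
  assumes sg: "simple_graph V E" and conn: "connected_graph V E" and two: "card V \<ge> 2"
    and v: "v \<in> V"
  shows "\<exists>u\<in>V. u \<noteq> v \<and> {v, u} \<in> E"
proof -
  have "finite V" using sg unfolding simple_graph_def by auto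
  then obtain w where w: "w \<in> V" "w \<noteq> v"
    using two v by (metis card_le_Suc0_iff_eq not_less_eq_eq numeral_2_eq_2)
  have "(adj E)\<^sup>*\<^sup>* v w" using conn v w unfolding connected_graph_def by blast
  then obtain y where "adj E v y" using w(2) by (metis converse_rtranclpE)
  then have "{v, y} \<in> E" unfolding adj_def .
  with edge_endpoints[OF sg this] show ?thesis by auto
qed

section \<open>Star covers\<close>

definition star_cover :: "'a set \<Rightarrow> 'a set set \<Rightarrow> 'a set set \<Rightarrow> bool" where
  "star_cover V E F \<longleftrightarrow> finite F \<and> (\<forall>S\<in>F. star_vset V E S) \<and> V \<subseteq> \<Union>F"

lemma domination_number_star_cover:
  "domination_number V E = (LEAST k. \<exists>F. star_cover V E F \<and> card F = k)"
  unfolding domination_number_def star_cover_def by meson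

lemma domination_number_le:
  assumes "star_cover V E F"
  shows "domination_number V E \<le> card F"
  unfolding domination_number_star_cover using assms by (intro Least_le) blast

text \<open>If no vertex is isolated, the edges at the vertices form a star cover, so the
  minimum in the definition of the domination number is attained.\<close>
lemma domination_number_attained:
  assumes fin: "finite V" and nbr: "\<And>v. v \<in> V \<Longrightarrow> \<exists>u\<in>V. u \<noteq> v \<and> {v, u} \<in> E"
  obtains F where "star_cover V E F" "card F = domination_number V E"
proof -
  obtain n where n: "\<And>v. v \<in> V \<Longrightarrow> n v \<in> V \<and> n v \<noteq> v \<and> {v, n v} \<in> E"
    using nbr by metis
  have "star_vset V E {v, n v}" if "v \<in> V" for v
    unfolding star_vset_def using n[OF that] that
    by (intro bexI[of _ v]) (auto simp: adj_def)
  then have "star_cover V E ((\<lambda>v. {v, n v}) ` V)"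
    unfolding star_cover_def using fin by blast
  then have "\<exists>F. star_cover V E F \<and> card F = card ((\<lambda>v. {v, n v}) ` V)" by blast
  then have "\<exists>F. star_cover V E F \<and> card F = domination_number V E"
    unfolding domination_number_star_cover by (rule LeastI)
  with that show ?thesis by blast
qed

section \<open>Upper bound: saturated coverings\<close>

lemma covering_edge_subset:
  assumes "simple_graph V E" "domino_covering V E D" "e \<in># D"
  shows "e \<subseteq> V"
proof -
  have "e \<in> E" using assms(2,3) unfolding domino_covering_def by blast
  then obtain a b where "e = {a, b}" "a \<in> V" "b \<in> V"
    using assms(1) unfolding simple_graph_def by blast
  then show ?thesis by simp
qed

text \<open>p picks a private vertex on every edge of D: one lying on no other edge of D
  (in particular, on no second copy of the same edge).\<close>
definition private_vertex_map :: "'a set multiset \<Rightarrow> ('a set \<Rightarrow> 'a) \<Rightarrow> bool" where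
  "private_vertex_map D p \<longleftrightarrow> (\<forall>e\<in>#D. p e \<in> e \<and> (\<forall>e'\<in>#D - {#e#}. p e \<notin> e'))"

lemma private_vertex_mapD:
  assumes "private_vertex_map D p" "e \<in># D"
  shows private_on_edge: "p e \<in> e"
    and private_off_others: "e' \<in># D - {#e#} \<Longrightarrow> p e \<notin> e'"
  using assms unfolding private_vertex_map_def by auto

text \<open>Every edge of a saturated covering has a private vertex: saturation provides a
  vertex covered by no other edge, and since D covers it, it lies on the edge itself.\<close>
lemma saturated_private_vertices:
  assumes cov: "domino_covering V E D" and sat: "saturated V D"
  obtains p where "private_vertex_map D p"
proof -
  obtain p where p: "\<And>e. e \<in># D \<Longrightarrow> p e \<in> V \<and> (\<forall>e'\<in># D - {#e#}. p e \<notin> e')"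
    using sat unfolding saturated_def by metis
  have "p e \<in> e" if e: "e \<in># D" for e
  proof -
    obtain e'' where e'': "e'' \<in># D" "p e \<in> e''"
      using cov p[OF e] unfolding domino_covering_def by blast
    have "e'' = e"
    proof (rule ccontr)
      assume "e'' \<noteq> e"
      with e''(1) have "e'' \<in># D - {#e#}" by (simp add: in_diff_count)
      with p[OF e] e''(2) show False by blast
    qed
    with e'' show ?thesis by simp
  qed
  with p that show ?thesis unfolding private_vertex_map_def by blast
qed

text \<open>A multiset with a private vertex map has no repeated elements, and its
  elements are told apart by their private vertices.\<close>
lemma private_vertex_map_card:
  assumes p: "private_vertex_map D p"
  shows "size D = card (p ` set_mset D)"
proof -
  have once: "count D e = 1" if e: "e \<in># D" for e
  proof (rule ccontr)
    assume "count D e \<noteq> 1"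
    with e have "e \<in># D - {#e#}"
      by (simp add: in_diff_count) (metis count_greater_zero_iff Suc_lessI)
    with private_off_others[OF p e] private_on_edge[OF p e] show False by blast
  qed
  have "inj_on p (set_mset D)"
  proof (rule inj_onI)
    fix e e' assume e: "e \<in># D" and e': "e' \<in># D" and same: "p e = p e'"
    show "e = e'"
    proof (rule ccontr)
      assume "e \<noteq> e'"
      with e' have "e' \<in># D - {#e#}" by (simp add: in_diff_count)
      with private_off_others[OF p e] private_on_edge[OF p e'] same show False by simp
    qed
  qed
  moreover have "size D = card (set_mset D)"
    using once by (simp add: size_multiset_overloaded_eq)
  ultimately show ?thesis by (simp add: card_image)
qed

text \<open>The other endpoint of an edge is not a private vertex: it lies on that edge,
  hence on no edge of which it could be the private vertex.\<close>
lemma private_partner: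
  assumes sg: "simple_graph V E" and cov: "domino_covering V E D"
    and p: "private_vertex_map D p" and e: "e \<in># D"
  obtains w where "e = {p e, w}" "w \<noteq> p e" "w \<in> V - p ` set_mset D"
proof -
  have "e \<in> E" using cov e unfolding domino_covering_def by blast
  then obtain a b where "e = {a, b}" "a \<noteq> b" "a \<in> V" "b \<in> V"
    using sg unfolding simple_graph_def by blast
  moreover note private_on_edge[OF p e]
  ultimately have "\<exists>w. e = {p e, w} \<and> w \<noteq> p e \<and> w \<in> V" by auto
  then obtain w where w: "e = {p e, w}" "w \<noteq> p e" "w \<in> V" by blast
  have "w \<notin> p ` set_mset D"
  proof
    assume "w \<in> p ` set_mset D"
    then obtain e' where e': "e' \<in># D" "w = p e'" by blast
    with w have "e \<noteq> e'" by auto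
    with e have "e \<in># D - {#e'#}" by (simp add: in_diff_count)
    with private_off_others[OF p e'(1)] e' w show False by blast
  qed
  with w that show ?thesis by blast
qed

definition covering_star :: "'a set multiset \<Rightarrow> 'a \<Rightarrow> 'a set" where
  "covering_star D c = insert c {x. {c, x} \<in># D}"

text \<open>The stars at the vertices that are not private form a star cover: such a vertex
  is covered by an edge whose private vertex is then one of its leaves, and every
  private vertex is a leaf of the star at the other endpoint of its edge.\<close>
lemma private_complement_star_cover:
  assumes sg: "simple_graph V E" and cov: "domino_covering V E D"
    and p: "private_vertex_map D p"
  shows "star_cover V E (covering_star D ` (V - p ` set_mset D))"
proof -
  let ?C = "V - p ` set_mset D"
  have DE: "set_mset D \<subseteq> E" and covered: "\<And>v. v \<in> V \<Longrightarrow> \<exists>e\<in>#D. v \<in> e"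
    using cov unfolding domino_covering_def by auto
  note partner = private_partner[OF sg cov p]
  have "star_vset V E (covering_star D c)" if c: "c \<in> ?C" for c
    unfolding star_vset_def
  proof (intro bexI[of _ c] conjI)
    show "covering_star D c \<subseteq> V"
      using c DE edge_endpoints[OF sg] unfolding covering_star_def by auto
    show "\<forall>x\<in>covering_star D c - {c}. adj E c x"
      using DE unfolding covering_star_def adj_def by auto
    obtain e where e: "e \<in># D" "c \<in> e" using covered c by blast
    obtain w where "e = {p e, w}" "w \<noteq> p e" "w \<in> ?C" by (rule partner[OF e(1)])
    moreover have "c \<noteq> p e" using c e(1) by blast
    ultimately have "e = {c, p e}" using e(2) by auto
    with e(1) have "{c, p e} \<in># D" by simp
    then show "covering_star D c - {c} \<noteq> {}"
      using \<open>c \<noteq> p e\<close> unfolding covering_star_def by blast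
  qed (simp add: covering_star_def)
  moreover have "v \<in> \<Union>(covering_star D ` ?C)" if v: "v \<in> V" for v
  proof (cases "v \<in> p ` set_mset D")
    case True
    then obtain e where e: "e \<in># D" "v = p e" by blast
    obtain w where "e = {p e, w}" "w \<noteq> p e" "w \<in> ?C" by (rule partner[OF e(1)])
    with e have "{w, v} \<in># D" "w \<in> ?C" by (auto simp: insert_commute)
    then show ?thesis unfolding covering_star_def by blast
  qed (use v in \<open>auto simp: covering_star_def\<close>)
  moreover have "finite V" using sg unfolding simple_graph_def by simp
  ultimately show ?thesis unfolding star_cover_def by blast
qed

lemma saturated_covering_bound:
  assumes sg: "simple_graph V E" and cov: "domino_covering V E D" and sat: "saturated V D"
  shows "size D + domination_number V E \<le> card V"
proof -
  obtain p where p: "private_vertex_map D p"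
    using saturated_private_vertices[OF cov sat] by blast
  let ?L = "p ` set_mset D"
  have fin: "finite V" using sg unfolding simple_graph_def by simp
  have LV: "?L \<subseteq> V"
    using private_on_edge[OF p] covering_edge_subset[OF sg cov] by blast
  have "domination_number V E \<le> card (covering_star D ` (V - ?L))"
    using domination_number_le private_complement_star_cover[OF sg cov p] .
  also have "\<dots> \<le> card (V - ?L)" using fin by (simp add: card_image_le)
  also have "\<dots> = card V - size D"
    using fin LV private_vertex_map_card[OF p] by (simp add: card_Diff_subset finite_subset)
  finally show ?thesis
    using card_mono[OF fin LV] private_vertex_map_card[OF p] by linarith
qed

section \<open>Lower bound: star-forest maps\<close>

text \<open>A star-forest map sends every vertex to the centre of its star: centres are the
  fixed points, and every other vertex is adjacent to its centre.\<close>
definition star_forest_map :: "'a set \<Rightarrow> 'a set set \<Rightarrow> ('a \<Rightarrow> 'a) \<Rightarrow> bool" where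
  "star_forest_map V E h \<longleftrightarrow>
     (\<forall>v\<in>V. h v \<in> V \<and> h (h v) = h v \<and> (h v \<noteq> v \<longrightarrow> {v, h v} \<in> E))"

definition centres :: "'a set \<Rightarrow> ('a \<Rightarrow> 'a) \<Rightarrow> 'a set" where
  "centres V h = {v\<in>V. h v = v}"

definition lonely_centres :: "'a set \<Rightarrow> ('a \<Rightarrow> 'a) \<Rightarrow> 'a set" where
  "lonely_centres V h = {c \<in> centres V h. \<forall>v\<in>V. h v = c \<longrightarrow> v = c}"

text \<open>Sending every vertex to the centre of some star containing it turns a star
  cover into a star-forest map with at most as many centres.\<close>
lemma star_cover_forest_map:
  assumes F: "star_cover V E F"
  obtains h where "star_forest_map V E h" "card (centres V h) \<le> card F"
proof -
  have finF: "finite F" and cover: "V \<subseteq> \<Union>F"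
    using F unfolding star_cover_def by auto
  obtain cen where cen: "\<And>S. S \<in> F \<Longrightarrow>
      cen S \<in> S \<and> S \<subseteq> V \<and> (\<forall>x\<in>S - {cen S}. {cen S, x} \<in> E)"
    using F unfolding star_cover_def star_vset_def adj_def by metis
  define star_of where "star_of v = (SOME S. S \<in> F \<and> v \<in> S)" for v
  have star_of: "star_of v \<in> F" "v \<in> star_of v" if "v \<in> V" for v
    using someI_ex[of "\<lambda>S. S \<in> F \<and> v \<in> S"] cover that unfolding star_of_def by blast+
  define h where "h v = (if v \<in> cen ` F then v else cen (star_of v))" for v
  have h_centre: "h v \<in> cen ` F" if "v \<in> V" for v
    using star_of[OF that] unfolding h_def by auto
  have "cen ` F \<subseteq> V" using cen by blast
  have "star_forest_map V E h"
    unfolding star_forest_map_def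
  proof
    fix v assume v: "v \<in> V"
    have fixed: "h (h v) = h v" using h_centre[OF v] unfolding h_def by simp
    have "{v, h v} \<in> E" if moved: "h v \<noteq> v"
    proof -
      have "v \<notin> cen ` F" "h v = cen (star_of v)" using moved unfolding h_def by auto
      moreover have "v \<noteq> cen (star_of v)" using \<open>v \<notin> cen ` F\<close> star_of(1)[OF v] by blast
      ultimately show ?thesis using cen[OF star_of(1)[OF v]] star_of(2)[OF v]
        by (auto simp: insert_commute)
    qed
    then show "h v \<in> V \<and> h (h v) = h v \<and> (h v \<noteq> v \<longrightarrow> {v, h v} \<in> E)"
      using fixed h_centre[OF v] \<open>cen ` F \<subseteq> V\<close> by blast
  qed
  moreover have "centres V h \<subseteq> cen ` F"
    using h_centre unfolding centres_def by force
  then have "card (centres V h) \<le> card F"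
    using finF by (meson card_image_le card_mono finite_imageI order_trans)
  ultimately show ?thesis using that by blast
qed

lemma lonely_centreD:
  assumes "t \<in> lonely_centres V h"
  shows "t \<in> V" "h t = t" "\<And>v. v \<in> V \<Longrightarrow> h v = t \<Longrightarrow> v = t"
  using assms unfolding lonely_centres_def centres_def by auto

lemma leaf_not_centre:
  assumes "star_forest_map V E h" "h u \<noteq> u" "v \<in> V"
  shows "h v \<noteq> u"
  using assms unfolding star_forest_map_def by metis

lemma join_neighbouring_centre:
  assumes forest: "star_forest_map V E h" and t: "t \<in> lonely_centres V h"
    and u: "u \<in> V" "u \<noteq> t" "{t, u} \<in> E" and u_centre: "h u = u"
  defines "h' \<equiv> h(t := u)"
  shows "star_forest_map V E h'" and "centres V h' \<subseteq> centres V h"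
    and "lonely_centres V h' \<subseteq> lonely_centres V h - {t}"
proof -
  note t_lonely = lonely_centreD[OF t]
  show "star_forest_map V E h'"
    unfolding star_forest_map_def
  proof
    fix v assume v: "v \<in> V"
    show "h' v \<in> V \<and> h' (h' v) = h' v \<and> (h' v \<noteq> v \<longrightarrow> {v, h' v} \<in> E)"
    proof (cases "v = t")
      case True
      then show ?thesis using u u_centre unfolding h'_def by auto
    next
      case False
      then have "h v \<noteq> t" using t_lonely(3) v by blast
      then show ?thesis using False forest v unfolding h'_def star_forest_map_def by auto
    qed
  qed
  show "centres V h' \<subseteq> centres V h" using u unfolding h'_def centres_def by auto
  show "lonely_centres V h' \<subseteq> lonely_centres V h - {t}"
  proof
    fix c assume "c \<in> lonely_centres V h'"
    then have c: "c \<in> V" "c \<noteq> t" "h c = c"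
      and alone: "\<And>v. v \<in> V \<Longrightarrow> h' v = c \<Longrightarrow> v = c"
      using u unfolding h'_def lonely_centres_def centres_def by (auto split: if_splits)
    have "v = c" if "v \<in> V" "h v = c" for v
      using that alone[of v] c t_lonely(1,2) unfolding h'_def by (cases "v = t") auto
    then show "c \<in> lonely_centres V h - {t}" using c unfolding lonely_centres_def centres_def by auto
  qed
qed

lemma steal_leaf:
  assumes forest: "star_forest_map V E h" and t: "t \<in> lonely_centres V h"
    and u: "u \<in> V" "u \<noteq> t" "{t, u} \<in> E" and u_leaf: "h u \<noteq> u"
    and w: "w \<in> V" "w \<noteq> u" "w \<noteq> h u" "h w = h u"
  defines "h' \<equiv> h(u := t)"
  shows "star_forest_map V E h'" and "centres V h' \<subseteq> centres V h"
    and "lonely_centres V h' \<subseteq> lonely_centres V h - {t}"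
proof -
  note t_lonely = lonely_centreD[OF t]
  show "star_forest_map V E h'"
    unfolding star_forest_map_def
  proof
    fix v assume v: "v \<in> V"
    show "h' v \<in> V \<and> h' (h' v) = h' v \<and> (h' v \<noteq> v \<longrightarrow> {v, h' v} \<in> E)"
    proof (cases "v = u")
      case True
      then show ?thesis using u t_lonely(1,2) unfolding h'_def by (auto simp: insert_commute)
    next
      case False
      then show ?thesis using leaf_not_centre[OF forest u_leaf v] forest v
        unfolding h'_def star_forest_map_def by auto
    qed
  qed
  show "centres V h' \<subseteq> centres V h" using u unfolding h'_def centres_def by auto
  show "lonely_centres V h' \<subseteq> lonely_centres V h - {t}"
  proof
    fix c assume "c \<in> lonely_centres V h'"
    then have c: "c \<in> V" "c \<noteq> u" "h c = c"
      and alone: "\<And>v. v \<in> V \<Longrightarrow> h' v = c \<Longrightarrow> v = c"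
      using u unfolding h'_def lonely_centres_def centres_def by (auto split: if_splits)
    have "c \<noteq> t" using alone[of u] u unfolding h'_def by auto
    moreover have "v = c" if v: "v \<in> V" "h v = c" for v
    proof (cases "v = u")
      case False
      then show ?thesis using alone[of v] v unfolding h'_def by auto
    next
      case True
      then have "h w = c" using v w by auto
      then show ?thesis using alone[of w] w unfolding h'_def by auto
    qed
    ultimately show "c \<in> lonely_centres V h - {t}" using c unfolding lonely_centres_def centres_def by auto
  qed
qed

text \<open>If u is the only leaf of its star with centre c = h u, then u becomes the centre
  of the star on u, c and t; this trades the two centres t and c for u.\<close>
lemma promote_leaf:
  assumes forest: "star_forest_map V E h" and t: "t \<in> lonely_centres V h"
    and u: "u \<in> V" "u \<noteq> t" "{t, u} \<in> E" and u_leaf: "h u \<noteq> u"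
    and only_leaf: "\<And>w. w \<in> V \<Longrightarrow> h w = h u \<Longrightarrow> w = u \<or> w = h u"
  defines "h' \<equiv> h(u := u, h u := u, t := u)"
  shows "star_forest_map V E h'" and "centres V h' \<subseteq> insert u (centres V h - {t})"
    and "lonely_centres V h' \<subseteq> lonely_centres V h - {t}"
proof -
  define c where "c = h u"
  note t_lonely = lonely_centreD[OF t]
  have c: "c \<in> V" "h c = c" "{u, c} \<in> E"
    using forest u u_leaf unfolding star_forest_map_def c_def by auto
  have "c \<noteq> t" using t_lonely(3)[OF u(1)] u c_def by auto
  moreover have "c \<noteq> u" using u_leaf c_def by auto
  ultimately have new: "h' u = u" "h' c = u" "h' t = u" using u unfolding h'_def c_def by auto
  have old: "h' v = h v" if "v \<noteq> u" "v \<noteq> c" "v \<noteq> t" for v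
    using that unfolding h'_def c_def by auto
  show "star_forest_map V E h'"
    unfolding star_forest_map_def
  proof
    fix v assume v: "v \<in> V"
    show "h' v \<in> V \<and> h' (h' v) = h' v \<and> (h' v \<noteq> v \<longrightarrow> {v, h' v} \<in> E)"
    proof (cases "v = u \<or> v = c \<or> v = t")
      case True
      then show ?thesis using new u c by (auto simp: insert_commute)
    next
      case False
      then have "h v \<noteq> t" "h v \<noteq> c" "h v \<noteq> u"
        using t_lonely(3)[OF v] only_leaf[OF v] leaf_not_centre[OF forest u_leaf v] c_def by auto
      then show ?thesis using False old forest v unfolding star_forest_map_def by auto
    qed
  qed
  show "centres V h' \<subseteq> insert u (centres V h - {t})"
    using new old \<open>c \<noteq> t\<close> unfolding centres_def by force
  show "lonely_centres V h' \<subseteq> lonely_centres V h - {t}"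
  proof
    fix d assume "d \<in> lonely_centres V h'"
    then have d: "d \<in> V" "h' d = d" and alone: "\<And>v. v \<in> V \<Longrightarrow> h' v = d \<Longrightarrow> v = d"
      unfolding lonely_centres_def centres_def by auto
    have d_new: "d \<noteq> u" "d \<noteq> c" "d \<noteq> t"
      using alone[OF c(1)] new d \<open>c \<noteq> u\<close> \<open>c \<noteq> t\<close> u by auto
    then have "h d = d" using d old by auto
    moreover have "v = d" if v: "v \<in> V" "h v = d" for v
    proof -
      have "v \<noteq> u" "v \<noteq> c" "v \<noteq> t" using v d_new c_def c t_lonely(2) by auto
      then show "v = d" using alone[of v] v old by auto
    qed
    ultimately show "d \<in> lonely_centres V h - {t}"
      using d d_new unfolding lonely_centres_def centres_def by auto
  qed
qed

lemma remove_lonely_centre: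
  assumes fin: "finite V" and nbr: "\<And>v. v \<in> V \<Longrightarrow> \<exists>u\<in>V. u \<noteq> v \<and> {v, u} \<in> E"
    and forest: "star_forest_map V E h" and t: "t \<in> lonely_centres V h"
  obtains h' where "star_forest_map V E h'" "card (centres V h') \<le> card (centres V h)"
    "lonely_centres V h' \<subseteq> lonely_centres V h - {t}"
proof -
  have t_centre: "t \<in> centres V h" using t unfolding lonely_centres_def by blast
  obtain u where u: "u \<in> V" "u \<noteq> t" "{t, u} \<in> E"
    using nbr[OF lonely_centreD(1)[OF t]] by (auto simp: insert_commute)
  have fin_centres: "finite (centres V h)" using fin unfolding centres_def by auto
  consider (centre) "h u = u"
    | (shared_leaf) w where "h u \<noteq> u" "w \<in> V" "w \<noteq> u" "w \<noteq> h u" "h w = h u"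
    | (only_leaf) "h u \<noteq> u" "\<And>w. w \<in> V \<Longrightarrow> h w = h u \<Longrightarrow> w = u \<or> w = h u"
    by blast
  then show ?thesis
  proof cases
    case centre
    note new = join_neighbouring_centre[OF forest t u centre]
    show ?thesis by (rule that[OF new(1) card_mono[OF fin_centres new(2)] new(3)])
  next
    case shared_leaf
    note new = steal_leaf[OF forest t u shared_leaf]
    show ?thesis by (rule that[OF new(1) card_mono[OF fin_centres new(2)] new(3)])
  next
    case only_leaf
    note new = promote_leaf[OF forest t u only_leaf]
    have "card (centres V (h(u := u, h u := u, t := u))) \<le> card (insert u (centres V h - {t}))"
      using new(2) fin_centres by (intro card_mono) auto
    also have "\<dots> \<le> Suc (card (centres V h - {t}))"
      using fin_centres by (simp add: card_insert_if)
    also have "\<dots> = card (centres V h)"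
      using card.remove[OF fin_centres t_centre] by simp
    finally show ?thesis using that new(1,3) by blast
  qed
qed

lemma no_lonely_centres:
  assumes fin: "finite V" and nbr: "\<And>v. v \<in> V \<Longrightarrow> \<exists>u\<in>V. u \<noteq> v \<and> {v, u} \<in> E"
    and forest: "star_forest_map V E h"
  shows "\<exists>h'. star_forest_map V E h' \<and> lonely_centres V h' = {} \<and>
    card (centres V h') \<le> card (centres V h)"
  using forest
proof (induction "card (lonely_centres V h)" arbitrary: h rule: less_induct)
  case less
  show ?case
  proof (cases "lonely_centres V h = {}")
    case True
    then show ?thesis using less.prems by blast
  next
    case False
    then obtain t where t: "t \<in> lonely_centres V h" by blast
    obtain h1 where h1: "star_forest_map V E h1" "card (centres V h1) \<le> card (centres V h)"
      "lonely_centres V h1 \<subseteq> lonely_centres V h - {t}"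
      using remove_lonely_centre[OF fin nbr less.prems t] by blast
    have "finite (lonely_centres V h)" using fin unfolding lonely_centres_def centres_def by auto
    moreover have "lonely_centres V h1 \<subset> lonely_centres V h" using h1(3) t by blast
    ultimately have "card (lonely_centres V h1) < card (lonely_centres V h)"
      by (rule psubset_card_mono)
    from less.hyps[OF this h1(1)] h1(2) show ?thesis by (meson order_trans)
  qed
qed

definition forest_edges :: "'a set \<Rightarrow> ('a \<Rightarrow> 'a) \<Rightarrow> 'a set set" where
  "forest_edges V h = (\<lambda>v. {v, h v}) ` (V - centres V h)"

text \<open>A non-centre lies on no forest edge other than its own, because the other
  endpoint of a forest edge is a centre.\<close>
lemma forest_edge_private:
  assumes forest: "star_forest_map V E h"
    and v: "v \<in> V - centres V h" and w: "w \<in> V - centres V h" and on: "v \<in> {w, h w}"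
  shows "v = w"
proof (rule ccontr)
  assume "v \<noteq> w"
  with on have "v = h w" by blast
  with forest w have "h v = v" unfolding star_forest_map_def by auto
  with v show False unfolding centres_def by blast
qed

lemma forest_edges_size:
  assumes fin: "finite V" and forest: "star_forest_map V E h"
  shows "size (mset_set (forest_edges V h)) = card V - card (centres V h)"
proof -
  have "inj_on (\<lambda>v. {v, h v}) (V - centres V h)"
    by (rule inj_onI) (use forest_edge_private[OF forest] in blast)
  then have "card (forest_edges V h) = card (V - centres V h)"
    unfolding forest_edges_def by (rule card_image)
  also have "\<dots> = card V - card (centres V h)"
    using fin by (intro card_Diff_subset) (auto simp: centres_def)
  finally show ?thesis by simp
qed

text \<open>Without lonely centres every centre is covered by an edge to one of its leaves.\<close>
lemma forest_edges_covering:
  assumes fin: "finite V" and forest: "star_forest_map V E h"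
    and no_lonely: "lonely_centres V h = {}"
  shows "domino_covering V E (mset_set (forest_edges V h))"
proof -
  have edge: "{v, h v} \<in># mset_set (forest_edges V h)" if "v \<in> V" "h v \<noteq> v" for v
    using fin that unfolding forest_edges_def centres_def by auto
  have "set_mset (mset_set (forest_edges V h)) \<subseteq> E"
    using fin forest unfolding forest_edges_def centres_def star_forest_map_def by auto
  moreover have "\<exists>e\<in>#mset_set (forest_edges V h). v \<in> e" if v: "v \<in> V" for v
  proof (cases "h v = v")
    case True
    with v no_lonely obtain w where "w \<in> V" "h w = v" "w \<noteq> v"
      unfolding lonely_centres_def centres_def by blast
    with edge[of w] show ?thesis by auto
  qed (use edge[OF v] in auto)
  ultimately show ?thesis unfolding domino_covering_def by blast
qed

text \<open>Removing the edge of a non-centre v uncovers v.\<close>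
lemma forest_edges_saturated:
  assumes fin: "finite V" and forest: "star_forest_map V E h"
  shows "saturated V (mset_set (forest_edges V h))"
  unfolding saturated_def
proof
  let ?D = "mset_set (forest_edges V h)"
  have finD: "finite (forest_edges V h)" using fin unfolding forest_edges_def by simp
  fix e assume e: "e \<in># ?D"
  then obtain v where v: "v \<in> V - centres V h" "e = {v, h v}"
    using finD unfolding forest_edges_def by auto
  have "v \<notin> e'" if e': "e' \<in># ?D - {#e#}" for e'
  proof
    assume "v \<in> e'"
    have "e' \<noteq> e" using e e' finD by (auto simp: in_diff_count count_mset_set')
    moreover obtain w where w: "w \<in> V - centres V h" "e' = {w, h w}"
      using in_diffD[OF e'] finD unfolding forest_edges_def by auto
    moreover have "v = w"
      using forest_edge_private[OF forest v(1) w(1)] \<open>v \<in> e'\<close> w(2) by blast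
    ultimately show False using v(2) by simp
  qed
  then show "\<exists>v\<in>V. \<forall>e'\<in>#?D - {#e#}. v \<notin> e'" using v(1) by blast
qed

theorem mainTheorem16:
  fixes V :: "'a set" and E :: "'a set set"
  assumes "simple_graph V E" and "connected_graph V E" and "card V \<ge> 2"
  shows "(\<exists>D. domino_covering V E D \<and> saturated V D \<and>
            size D = card V - domination_number V E)
       \<and> (\<forall>D. domino_covering V E D \<and> saturated V D \<longrightarrow>
            size D \<le> card V - domination_number V E)"
proof -
  have fin: "finite V" using assms(1) unfolding simple_graph_def by simp
  note nbr = connected_has_neighbour[OF assms]
  have upper: "size D \<le> card V - domination_number V E"
    if "domino_covering V E D" "saturated V D" for D
    using saturated_covering_bound[OF assms(1) that] by linarith
  obtain F where F: "star_cover V E F" "card F = domination_number V E"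
    using domination_number_attained[OF fin nbr] by blast
  obtain h where h: "star_forest_map V E h" "card (centres V h) \<le> card F"
    using star_cover_forest_map[OF F(1)] by blast
  obtain h' where h': "star_forest_map V E h'" "lonely_centres V h' = {}"
    "card (centres V h') \<le> card (centres V h)"
    using no_lonely_centres[OF fin nbr h(1)] by blast
  let ?D = "mset_set (forest_edges V h')"
  have D: "domino_covering V E ?D" "saturated V ?D"
    using forest_edges_covering[OF fin h'(1,2)] forest_edges_saturated[OF fin h'(1)] by auto
  have "size ?D \<ge> card V - domination_number V E"
    using forest_edges_size[OF fin h'(1)] h(2) h'(3) F(2) by linarith
  with upper[OF D] have "size ?D = card V - domination_number V E" by (rule le_antisym)
  with D upper show ?thesis by blast
qed

end
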